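(* Let $(a_n)_{n\ge0}$ be the sequence $a_0=1$, $a_1=1$, $a_n=2a_{n-1}+a_{n-2}$ for $n\ge2$ (so $a=(1,1,3,7,17,41,\ldots)$, the numerators of the continued fraction convergents to $\sqrt2$). Then for all $n\ge0$, $a_n=\sum_{i=0}^n\binom{n}{i}(-1)^i2^{n-i}a_i$, and for all $n\ge1$, $$\sum_{i=0}^{n-1}\binom{n}{i}(-1)^i2^{n-i}a_i=\begin{cases}0,& n\text{ even},\\ 2a_n,& n\text{ odd}.\end{cases}$$ *)

theory Defs
  imports Main
begin

fun pell_a :: "nat \<Rightarrow> int" where
  "pell_a 0 = 1"
| "pell_a (Suc 0) = 1"
| "pell_a (Suc (Suc n)) = 2 * pell_a (Suc n) + pell_a n"

end

theory Submission
  imports Defs Complex_Main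
begin

text \<open>With \<open>\<alpha>, \<beta> = 1 \<plusminus> \<surd>2\<close> we have \<open>a\<^sub>n = (\<alpha>\<^sup>n + \<beta>\<^sup>n)/2\<close>. The transform
  \<open>(u\<^sub>n) \<mapsto> \<Sum>\<^sub>i (n choose i) (-1)\<^sup>i 2\<^sup>n\<^sup>-\<^sup>i u\<^sub>i\<close> sends \<open>x\<^sup>n\<close> to \<open>(2 - x)\<^sup>n\<close>, and
  \<open>2 - \<alpha> = \<beta>\<close>, \<open>2 - \<beta> = \<alpha>\<close>, so it merely swaps the two terms and fixes \<open>a\<close>.
  Splitting off the term \<open>i = n\<close>, which is \<open>(-1)\<^sup>n a\<^sub>n\<close>, gives the second identity.\<close>

lemma pell_a_Binet: "real_of_int (pell_a n) = ((1 + sqrt 2)^n + (1 - sqrt 2)^n) / 2"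
proof (induction n rule: pell_a.induct)
  case (3 n)
  have root: "x^Suc (Suc n) = 2 * x^Suc n + x^n" if "x^2 = 2 * x + 1" for x :: real
  proof -
    have "x^Suc (Suc n) = x^n * x^2" by (simp add: power2_eq_square mult_ac)
    then show ?thesis using that by (simp add: algebra_simps)
  qed
  have \<alpha>: "(1 + sqrt 2)^2 = 2 * (1 + sqrt 2) + 1"
    and \<beta>: "(1 - sqrt 2)^2 = 2 * (1 - sqrt 2) + 1"
    by (simp_all add: algebra_simps power2_eq_square)
  have "(1 + sqrt 2)^Suc (Suc n) + (1 - sqrt 2)^Suc (Suc n)
      = 2 * ((1 + sqrt 2)^Suc n + (1 - sqrt 2)^Suc n) + ((1 + sqrt 2)^n + (1 - sqrt 2)^n)"
    unfolding root[OF \<alpha>] root[OF \<beta>] by (simp add: algebra_simps)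
  then show ?case
    using "3.IH" by simp
qed auto

lemma binomial_transform_power:
  fixes c x :: "'a::comm_ring_1"
  shows "(\<Sum>i=0..n. of_nat (n choose i) * (-1)^i * c^(n-i) * x^i) = (c - x)^n"
proof -
  have "(c - x)^n = (-x + c)^n" by simp
  also have "\<dots> = (\<Sum>i=0..n. of_nat (n choose i) * (-x)^i * c^(n-i))"
    using binomial_ring[of "-x" c n] by (simp add: atLeast0AtMost)
  also have "\<dots> = (\<Sum>i=0..n. of_nat (n choose i) * (-1)^i * c^(n-i) * x^i)"
    by (rule sum.cong) (simp_all add: power_minus[of x] mult_ac)
  finally show ?thesis by simp
qed

lemma pell_a_binomial_transform:
  "pell_a n = (\<Sum>i=0..n. of_nat (n choose i) * (-1)^i * 2^(n-i) * pell_a i)"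
proof -
  let ?\<alpha> = "1 + sqrt 2" and ?\<beta> = "1 - sqrt 2"
  let ?T = "\<lambda>x::real. \<Sum>i=0..n. real (n choose i) * (-1)^i * 2^(n-i) * x^i"
  have "real_of_int (\<Sum>i=0..n. of_nat (n choose i) * (-1)^i * 2^(n-i) * pell_a i)
      = (?T ?\<alpha> + ?T ?\<beta>) / 2"
    by (simp add: pell_a_Binet sum.distrib sum_divide_distrib algebra_simps add_divide_distrib)
  also have "\<dots> = ((2 - ?\<alpha>)^n + (2 - ?\<beta>)^n) / 2"
    by (simp only: binomial_transform_power)
  also have "\<dots> = real_of_int (pell_a n)"
    by (simp add: pell_a_Binet)
  finally show ?thesis by linarith
qed

theorem mainTheorem10:
  shows "(\<forall>n::nat. pell_a n = (\<Sum>i=0..n. of_nat (n choose i) * (-1)^i * 2^(n-i) * pell_a i))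
    \<and> (\<forall>n::nat. n \<ge> 1 \<longrightarrow>
        (\<Sum>i=0..n-1. of_nat (n choose i) * (-1)^i * 2^(n-i) * pell_a i) =
          (if even n then 0 else 2 * pell_a n))"
proof (intro conjI allI impI)
  fix n :: nat
  show "pell_a n = (\<Sum>i=0..n. of_nat (n choose i) * (-1)^i * 2^(n-i) * pell_a i)"
    by (rule pell_a_binomial_transform)
next
  fix n :: nat
  assume "n \<ge> 1"
  then obtain m where n: "n = Suc m" by (cases n) auto
  have "pell_a n = (\<Sum>i=0..n-1. of_nat (n choose i) * (-1)^i * 2^(n-i) * pell_a i)
                   + (-1)^n * pell_a n"
    using pell_a_binomial_transform[of n] by (simp add: n)
  then show "(\<Sum>i=0..n-1. of_nat (n choose i) * (-1)^i * 2^(n-i) * pell_a i) =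
      (if even n then 0 else 2 * pell_a n)"
    by auto
qed

end
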